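(* For $(a,b)\in\mathbb{R}^2$, let $\mathfrak{g}_{a,b}$ be the $8$-dimensional real nilpotent Lie algebra with a basis $\{e^1,\dots,e^8\}$ of its dual satisfying $$de^1=de^2=de^3=0,\quad de^4=e^{13},\quad de^5=e^{23},\quad de^6=3e^{14}+e^{25}-2e^{35},$$ $$de^7=2a\,e^{12}+e^{15}+e^{24}+2e^{34},\quad de^8=-2b\,e^{14}+e^{16}-2b\,e^{25}+e^{27}-2e^{45}.$$ If $\mathfrak{g}_{a,b}$ and $\mathfrak{g}_{a',b'}$ are isomorphic, then there is a non-zero real number $\rho$ such that $a'=\pm\rho a$ and $b'=\rho b$.
   Context: $e^{ij}=e^i\wedge e^j$, and $d$ denotes the Chevalley–Eilenberg differential, $d\alpha(X,Y)=-\alpha([X,Y])$ for $\alpha\in\mathfrak{g}^*$; these equations define the Lie bracket. *)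

theory Defs
  imports "HOL-Analysis.Analysis"
begin

text \<open>The Lie algebra g_{a,b} is realised on real^8. Basis vector e_k (k = 1..8)
  is the standard basis vector with index of_nat (k-1) :: 8; e^k is the dual coordinate.\<close>

definition cf :: "real^8 \<Rightarrow> nat \<Rightarrow> real" where
  "cf x k = x $ (of_nat (k - 1) :: 8)"

definition ebas :: "nat \<Rightarrow> real^8" where
  "ebas k = axis (of_nat (k - 1) :: 8) 1"

definition w2 :: "nat \<Rightarrow> nat \<Rightarrow> real^8 \<Rightarrow> real^8 \<Rightarrow> real" where
  "w2 i j x y = cf x i * cf y j - cf x j * cf y i"

definition dE :: "real \<Rightarrow> real \<Rightarrow> nat \<Rightarrow> real^8 \<Rightarrow> real^8 \<Rightarrow> real" where
  "dE a b k x y =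
    (if k = 4 then w2 1 3 x y
     else if k = 5 then w2 2 3 x y
     else if k = 6 then 3 * w2 1 4 x y + w2 2 5 x y - 2 * w2 3 5 x y
     else if k = 7 then 2 * a * w2 1 2 x y + w2 1 5 x y + w2 2 4 x y + 2 * w2 3 4 x y
     else if k = 8 then - 2 * b * w2 1 4 x y + w2 1 6 x y - 2 * b * w2 2 5 x y
                        + w2 2 7 x y - 2 * w2 4 5 x y
     else 0)"

text \<open>Lie bracket determined by d alpha (x,y) = - alpha([x,y]).\<close>
definition lie_br :: "real \<Rightarrow> real \<Rightarrow> real^8 \<Rightarrow> real^8 \<Rightarrow> real^8" where
  "lie_br a b x y = (\<Sum>k\<in>{1..8}. (- dE a b k x y) *\<^sub>R ebas k)"

definition lie_iso :: "(real^8 \<Rightarrow> real^8) \<Rightarrow> real \<Rightarrow> real \<Rightarrow> real \<Rightarrow> real \<Rightarrow> bool" where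
  "lie_iso f a b a' b' \<longleftrightarrow> linear f \<and> bij f \<and>
     (\<forall>x y. f (lie_br a b x y) = lie_br a' b' (f x) (f y))"

definition lie_isomorphic :: "real \<Rightarrow> real \<Rightarrow> real \<Rightarrow> real \<Rightarrow> bool" where
  "lie_isomorphic a b a' b' \<longleftrightarrow> (\<exists>f. lie_iso f a b a' b')"

end

theory Submission
  imports Defs
begin

(* Write the isomorphism f as a matrix M in the basis e_1, ..., e_8. Being a morphism means
   f^*(de^k) = sum_m M k m de^m, and evaluating on pairs of basis vectors gives polynomial
   equations in the entries. Since f preserves the derived algebra and the lower central
   series, M is block triangular and f e_8 = M 8 8 e_8 with M 8 8 <> 0. The equations for the
   top 3x3 block force it to be diag(p, t, t) with p^2 = t^2. Comparing the e_8-components of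
   f[e_1,e_4] and f[e_2,e_5] then gives b' = p b, and the e_7-component of f[e_1,e_2] gives
   a' = t a = +-p a. *)

lemma atLeastAtMost_1_8: "{1..8::nat} = {1, 2, 3, 4, 5, 6, 7, 8}"
  by auto

lemma of_nat_8_eq_iff:
  assumes "i \<in> {1..8}" "j \<in> {1..8}"
  shows "(of_nat (i - 1) :: 8) = of_nat (j - 1) \<longleftrightarrow> i = j"
  using assms unfolding atLeastAtMost_1_8 by (elim insertE) simp_all

lemma cf_ebas [simp]:
  "i \<in> {1..8} \<Longrightarrow> j \<in> {1..8} \<Longrightarrow> cf (ebas j) i = (if i = j then 1 else 0)"
  unfolding cf_def ebas_def axis_def using of_nat_8_eq_iff by auto

lemma cf_scaleR [simp]: "cf (c *\<^sub>R x) k = c * cf x k"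
  by (simp add: cf_def)

lemma exists_index_8: "\<exists>k\<in>{1..8}. i = (of_nat (k - 1) :: 8)"
proof (induct i)
  case (of_int z)
  then show ?case by (intro bexI[of _ "nat z + 1"]) auto
qed

lemma vec_eq_iff_cf: "x = y \<longleftrightarrow> (\<forall>k\<in>{1..8}. cf x k = cf y k)"
  unfolding cf_def vec_eq_iff by (metis exists_index_8)

lemma cf_lie_br:
  "k \<in> {1..8} \<Longrightarrow> cf (lie_br a b x y) k = - dE a b k x y"
proof -
  assume k: "k \<in> {1..8}"
  have "cf (lie_br a b x y) k = (\<Sum>m\<in>{1..8}. - dE a b m x y * cf (ebas m) k)"
    by (simp add: lie_br_def cf_def)
  also have "\<dots> = (\<Sum>m\<in>{1..8}. if k = m then - dE a b m x y else 0)"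
    by (rule sum.cong) (use k in auto)
  also have "\<dots> = - dE a b k x y"
    using k by simp
  finally show ?thesis .
qed

(* Keeps the index 1 from being rewritten to Suc 0, so that evaluated structure equations
   match the stated ones syntactically. *)
declare One_nat_def [simp del]

locale g_ab_isomorphism =
  fixes f :: "real^8 \<Rightarrow> real^8" and a b a' b' :: real
  assumes iso: "lie_iso f a b a' b'"
begin

definition M :: "nat \<Rightarrow> nat \<Rightarrow> real" where
  "M k j = cf (f (ebas j)) k"

lemma pullback_dE:
  assumes k: "k \<in> {1..8}"
  shows "dE a' b' k (f x) (f y) = (\<Sum>m\<in>{1..8}. M k m * dE a b m x y)"
proof -
  have lin: "linear f" and hom: "f (lie_br a b x y) = lie_br a' b' (f x) (f y)"
    using iso unfolding lie_iso_def by blast+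
  have "- dE a' b' k (f x) (f y) = cf (f (lie_br a b x y)) k"
    using k by (simp add: hom cf_lie_br)
  also have "\<dots> = (\<Sum>m\<in>{1..8}. - dE a b m x y * M k m)"
    unfolding lie_br_def M_def
    by (simp add: linear_sum[OF lin] linear_scale[OF lin] linear_neg[OF lin] cf_def)
  finally show ?thesis
    by (simp add: sum_negf mult.commute)
qed

lemma structure_eq:
  "k \<in> {1..8} \<Longrightarrow> dE a' b' k (f (ebas i)) (f (ebas j)) =
    (\<Sum>m\<in>{1, 2, 3, 4, 5, 6, 7, 8}. M k m * dE a b m (ebas i) (ebas j))"
  using pullback_dE by (simp only: atLeastAtMost_1_8)

lemmas coordinate_simps = dE_def w2_def M_def[symmetric]

lemma derived_algebra_preserved:
  assumes k: "k \<in> {1, 2, 3}"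
  shows "M k 4 = 0" "M k 5 = 0" "M k 6 = 0" "M k 7 = 0" "M k 8 = 0"
proof -
  have "(\<Sum>m\<in>{1, 2, 3, 4, 5, 6, 7, 8}. M k m * dE a b m (ebas i) (ebas j)) = 0" for i j
    using structure_eq[of k i j] k by (auto simp: dE_def)
  note vanish = this[simplified coordinate_simps, simplified]
  show "M k 4 = 0" "M k 5 = 0" "M k 6 = 0" "M k 7 = 0" "M k 8 = 0"
    using vanish[of 1 3] vanish[of 2 3] vanish[of 3 5] vanish[of 1 5] vanish[of 1 6]
    by simp_all
qed

lemma lower_central_series_preserved:
  "M 4 6 = 0" "M 5 6 = 0" "M 4 7 = 0" "M 5 7 = 0" "M 4 8 = 0" "M 5 8 = 0" "M 6 8 = 0" "M 7 8 = 0"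
proof -
  note zero = derived_algebra_preserved[of 1] derived_algebra_preserved[of 2]
    derived_algebra_preserved[of 3]
  show lower: "M 4 6 = 0" "M 5 6 = 0" "M 4 7 = 0" "M 5 7 = 0" "M 4 8 = 0" "M 5 8 = 0"
    using structure_eq[of 4 3 5] structure_eq[of 5 3 5] structure_eq[of 4 1 5]
      structure_eq[of 5 1 5] structure_eq[of 4 1 6] structure_eq[of 5 1 6]
    by (simp_all add: coordinate_simps zero)
  show "M 6 8 = 0" "M 7 8 = 0"
    using structure_eq[of 6 1 6] structure_eq[of 7 1 6] by (simp_all add: coordinate_simps zero lower)
qed

lemma image_ebas_8: "f (ebas 8) = M 8 8 *\<^sub>R ebas 8"
  unfolding vec_eq_iff_cf
proof
  fix k :: nat
  assume k: "k \<in> {1..8}"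
  have "M k 8 = 0" if "k \<noteq> 8"
    using k that derived_algebra_preserved lower_central_series_preserved
    unfolding atLeastAtMost_1_8 by auto
  then show "cf (f (ebas 8)) k = cf (M 8 8 *\<^sub>R ebas 8) k"
    using k by (cases "k = 8") (simp_all add: M_def)
qed

lemma M_8_8_nonzero: "M 8 8 \<noteq> 0"
proof
  assume "M 8 8 = 0"
  then have "f (ebas 8) = f 0"
    using iso image_ebas_8 by (simp add: lie_iso_def linear_0)
  then have "ebas 8 = 0"
    using iso by (auto simp: lie_iso_def bij_def dest: injD)
  then show False
    using cf_ebas[of 8 8] by (simp add: cf_def)
qed

lemmas vanishing_entries =
  derived_algebra_preserved[of 1, simplified] derived_algebra_preserved[of 2, simplified]
  derived_algebra_preserved[of 3, simplified] lower_central_series_preserved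

lemma M_3_1_M_3_2_relations:
  "M 3 1 * M 1 2 = M 1 1 * M 3 2" "M 3 1 * M 2 2 = M 2 1 * M 3 2"
  using structure_eq[of 4 1 2] structure_eq[of 5 1 2]
  by (simp_all add: coordinate_simps vanishing_entries)

lemma derived_block_entries:
  "M 4 4 = M 1 1 * M 3 3 - M 3 1 * M 1 3" "M 5 4 = M 2 1 * M 3 3 - M 3 1 * M 2 3"
  "M 4 5 = M 1 2 * M 3 3 - M 3 2 * M 1 3" "M 5 5 = M 2 2 * M 3 3 - M 3 2 * M 2 3"
  using structure_eq[of 4 1 3] structure_eq[of 5 1 3] structure_eq[of 4 2 3] structure_eq[of 5 2 3]
  by (simp_all add: coordinate_simps)

lemma M_8_8_factorization: "M 8 8 = M 3 3 ^ 2 * (M 1 1 * M 2 2 - M 2 1 * M 1 2)"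
proof -
  have "M 8 8 = M 4 4 * M 5 5 - M 5 4 * M 4 5"
    using structure_eq[of 8 4 5] by (simp add: coordinate_simps vanishing_entries)
  then show ?thesis
    using derived_block_entries M_3_1_M_3_2_relations by algebra
qed

lemma M_3_3_nonzero: "M 3 3 \<noteq> 0"
  and det_12_nonzero: "M 1 1 * M 2 2 - M 2 1 * M 1 2 \<noteq> 0"
  using M_8_8_nonzero M_8_8_factorization by auto

lemma M_3_1_zero: "M 3 1 = 0" and M_3_2_zero: "M 3 2 = 0"
proof -
  have "M 3 1 * (M 1 1 * M 2 2 - M 2 1 * M 1 2) = 0"
    and "M 3 2 * (M 1 1 * M 2 2 - M 2 1 * M 1 2) = 0"
    using M_3_1_M_3_2_relations by algebra+
  then show "M 3 1 = 0" "M 3 2 = 0"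
    using det_12_nonzero by simp_all
qed

lemma derived_block_diagonal:
  "M 4 4 = M 1 1 * M 3 3" "M 5 4 = M 2 1 * M 3 3" "M 4 5 = M 1 2 * M 3 3" "M 5 5 = M 2 2 * M 3 3"
  using derived_block_entries by (simp_all add: M_3_1_zero M_3_2_zero)

lemmas known_entries = vanishing_entries M_3_1_zero M_3_2_zero derived_block_diagonal

lemma column_6_entries:
  "3 * M 6 6 = M 3 3 * (3 * M 1 1 ^ 2 + M 2 1 ^ 2)" "M 6 6 = M 3 3 * (3 * M 1 2 ^ 2 + M 2 2 ^ 2)"
  "3 * M 7 6 = 2 * M 3 3 * M 1 1 * M 2 1" "M 7 6 = 2 * M 3 3 * M 1 2 * M 2 2"
  "- 2 * M 6 6 = M 3 3 * (3 * M 1 3 * M 1 2 + M 2 3 * M 2 2 - 2 * M 3 3 * M 2 2)"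
  "- 2 * M 7 6 = M 3 3 * (M 1 3 * M 2 2 + M 2 3 * M 1 2 + 2 * M 3 3 * M 1 2)"
  using structure_eq[of 6 1 4] structure_eq[of 6 2 5] structure_eq[of 7 1 4] structure_eq[of 7 2 5]
    structure_eq[of 6 3 5] structure_eq[of 7 3 5]
  by (simp_all add: coordinate_simps known_entries power2_eq_square algebra_simps)

lemma upper_block_quadrics:
  "3 * M 1 1 ^ 2 + M 2 1 ^ 2 = 3 * (3 * M 1 2 ^ 2 + M 2 2 ^ 2)"
  "M 1 1 * M 2 1 = 3 * M 1 2 * M 2 2"
  by (rule mult_left_cancel[OF M_3_3_nonzero, THEN iffD1], use column_6_entries(1-4) in algebra)+

lemma upper_block_relations:
  "M 1 1 ^ 2 = M 2 2 ^ 2" "M 2 1 ^ 2 = 9 * M 1 2 ^ 2" "M 2 1 * M 2 2 = 3 * M 1 1 * M 1 2"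
proof -
  note quadrics = upper_block_quadrics
  have "M 1 1 ^ 2 \<noteq> 3 * M 1 2 ^ 2"
  proof
    assume "M 1 1 ^ 2 = 3 * M 1 2 ^ 2"
    then have "(M 1 1 * M 2 2 - M 2 1 * M 1 2) ^ 2 = 0"
      using quadrics by algebra
    then show False
      using det_12_nonzero by simp
  qed
  moreover have "(M 1 1 ^ 2 - M 2 2 ^ 2) * (M 1 1 ^ 2 - 3 * M 1 2 ^ 2) = 0"
    using quadrics by algebra
  ultimately show diag: "M 1 1 ^ 2 = M 2 2 ^ 2"
    by simp
  then show off_diag: "M 2 1 ^ 2 = 9 * M 1 2 ^ 2"
    using quadrics by algebra
  have "(3 * M 1 1 * M 1 2 - M 2 1 * M 2 2) ^ 2 = 0"
    using diag off_diag quadrics by algebra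
  then show "M 2 1 * M 2 2 = 3 * M 1 1 * M 1 2"
    by simp
qed

lemma column_7_entries:
  "M 6 7 = M 3 3 * (3 * M 1 1 * M 1 2 + M 2 1 * M 2 2)"
  "2 * M 6 7 = M 3 3 * (3 * M 1 3 * M 1 1 + M 2 3 * M 2 1 - 2 * M 3 3 * M 2 1)"
  "M 7 7 = M 3 3 * (M 1 1 * M 2 2 + M 2 1 * M 1 2)"
  "2 * M 7 7 = M 3 3 * (M 1 3 * M 2 1 + M 2 3 * M 1 1 + 2 * M 3 3 * M 1 1)"
  using structure_eq[of 6 1 5] structure_eq[of 6 3 4] structure_eq[of 7 1 5] structure_eq[of 7 3 4]
  by (simp_all add: coordinate_simps known_entries algebra_simps)

lemma linear_relations:
  "2 * (3 * M 1 1 * M 1 2 + M 2 1 * M 2 2) = 3 * M 1 3 * M 1 1 + M 2 3 * M 2 1 - 2 * M 3 3 * M 2 1"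
  "- 2 * (3 * M 1 2 ^ 2 + M 2 2 ^ 2) = 3 * M 1 3 * M 1 2 + M 2 3 * M 2 2 - 2 * M 3 3 * M 2 2"
  "2 * (M 1 1 * M 2 2 + M 2 1 * M 1 2) = M 1 3 * M 2 1 + M 2 3 * M 1 1 + 2 * M 3 3 * M 1 1"
  "- 4 * M 1 2 * M 2 2 = M 1 3 * M 2 2 + M 2 3 * M 1 2 + 2 * M 3 3 * M 1 2"
  by (rule mult_left_cancel[OF M_3_3_nonzero, THEN iffD1],
      use column_6_entries column_7_entries in algebra)+

lemma M_1_1_nonzero: "M 1 1 \<noteq> 0"
proof
  assume zero_11: "M 1 1 = 0"
  then have zero_22: "M 2 2 = 0"
    using upper_block_relations(1) by simp
  then have "M 2 1 \<noteq> 0" "M 1 2 \<noteq> 0"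
    using det_12_nonzero zero_11 by auto
  moreover have "M 2 1 * (M 2 3 - 2 * M 3 3) = 0" "M 1 2 * (M 2 3 + 2 * M 3 3) = 0"
    using linear_relations(1,4) zero_11 zero_22 by algebra+
  ultimately have "M 2 3 = 2 * M 3 3" "M 2 3 = - 2 * M 3 3"
    by simp_all
  then show False
    using M_3_3_nonzero by simp
qed

lemma M_2_2_nonzero: "M 2 2 \<noteq> 0"
  using M_1_1_nonzero upper_block_relations(1) by auto

lemma upper_block_diagonal: "M 1 2 = 0" "M 2 1 = 0" "M 3 3 = M 2 2" "M 2 3 = 0"
proof -
  have "M 1 1 * (M 1 2 * (2 * M 2 2 + M 3 3)) = 0"
    and "M 1 1 * (M 2 2 ^ 2 + 3 * M 1 2 ^ 2 - M 3 3 * M 2 2) = 0"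
    using upper_block_relations linear_relations by algebra+
  then have factored: "M 1 2 * (2 * M 2 2 + M 3 3) = 0"
    and quadric: "M 2 2 ^ 2 + 3 * M 1 2 ^ 2 = M 3 3 * M 2 2"
    using M_1_1_nonzero by simp_all
  show zero_12: "M 1 2 = 0"
  proof (rule ccontr)
    assume "M 1 2 \<noteq> 0"
    then have "M 3 3 = - 2 * M 2 2" and "M 1 2 ^ 2 > 0"
      using factored by auto
    then have "3 * M 2 2 ^ 2 + 3 * M 1 2 ^ 2 = 0" "M 2 2 ^ 2 \<ge> 0"
      using quadric by (simp_all add: power2_eq_square)
    with \<open>M 1 2 ^ 2 > 0\<close> show False
      by linarith
  qed
  show "M 2 1 = 0"
    using upper_block_relations(2) zero_12 by simp
  have "M 2 2 * (M 2 2 - M 3 3) = 0"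
    using quadric zero_12 by algebra
  then show diag_33: "M 3 3 = M 2 2"
    using M_2_2_nonzero by simp
  have "M 2 3 * M 2 2 = 0"
    using linear_relations(2) zero_12 diag_33 by algebra
  then show "M 2 3 = 0"
    using M_2_2_nonzero by simp
qed

lemma M_6_6_eq: "M 6 6 = M 2 2 ^ 3"
  using column_6_entries(2) upper_block_diagonal by (simp add: power2_eq_square power3_eq_cube)

lemma M_1_3_zero: "M 1 3 = 0"
proof -
  have "M 1 3 * M 6 6 = 0"
    using structure_eq[of 8 3 6] by (simp add: coordinate_simps known_entries upper_block_diagonal)
  then show ?thesis
    using M_6_6_eq M_2_2_nonzero by simp
qed

lemmas upper_block_entries = known_entries upper_block_diagonal M_1_3_zero

lemma b'_eq: "b' = M 1 1 * b"
proof -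
  note instances = structure_eq[of 6 1 2] structure_eq[of 6 1 5] structure_eq[of 6 1 3]
    structure_eq[of 7 2 3] structure_eq[of 8 3 5] structure_eq[of 8 1 6]
    structure_eq[of 8 1 4] structure_eq[of 8 2 5]
  note eqs = instances[simplified coordinate_simps upper_block_entries, simplified]
    M_6_6_eq upper_block_relations(1)
  have "M 2 2 ^ 2 * M 4 2 = 0"
    using eqs by algebra
  then have "M 4 2 = 0"
    using M_2_2_nonzero by simp
  then have "M 2 2 ^ 3 * (b' - M 1 1 * b) = 0"
    using eqs by algebra
  then show ?thesis
    using M_2_2_nonzero by simp
qed

lemma a'_eq: "a' = M 2 2 * a"
proof -
  note instances = structure_eq[of 6 2 3] structure_eq[of 8 1 5] structure_eq[of 8 3 4]
    structure_eq[of 7 1 5] structure_eq[of 7 1 2]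
  note eqs = instances[simplified coordinate_simps upper_block_entries, simplified]
  have "M 1 1 * M 6 5 - 2 * (M 4 1 * (M 2 2 * M 2 2)) = M 5 3 * (M 1 1 * M 2 2)"
    using eqs(2,3) by simp
  then have "M 2 2 * (M 1 1 * M 5 2 - M 2 2 * M 4 1) = 0"
    unfolding eqs(1)[symmetric] by (simp add: algebra_simps)
  then have "M 1 1 * M 5 2 = M 2 2 * M 4 1"
    using M_2_2_nonzero by simp
  then have "M 1 1 * M 2 2 * (a' - M 2 2 * a) = 0"
    using eqs by algebra
  then show ?thesis
    using M_1_1_nonzero M_2_2_nonzero by simp
qed

end

theorem proposition3p1:
  fixes a b a' b' :: real
  assumes "lie_isomorphic a b a' b'"
  shows "\<exists>\<rho>::real. \<rho> \<noteq> 0 \<and> (a' = \<rho> * a \<or> a' = - \<rho> * a) \<and> b' = \<rho> * b"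
proof -
  obtain f where "lie_iso f a b a' b'"
    using assms unfolding lie_isomorphic_def by blast
  then interpret g_ab_isomorphism f a b a' b'
    by unfold_locales
  have "M 2 2 = M 1 1 \<or> M 2 2 = - M 1 1"
    using upper_block_relations(1) by (auto simp: power2_eq_iff)
  then show ?thesis
    using M_1_1_nonzero a'_eq b'_eq by (intro exI[of _ "M 1 1"]) auto
qed

end
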